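(* Let $t\in\mathbb Z$ and $k\ge0$, and let $W_t(|t|+2k)$ be the cell module of ${\mathbb{TLB}}_{|t|+2k}(q,Q)$ indexed by $t$. Then $$\dim W_t(|t|+2k)=\binom{|t|+2k}{k}.$$
   Context: Temperley–Lieb diagrams $t\to s$ have $t$ bottom and $s$ top points of a rectangle joined in pairs by non-crossing arcs; the leftmost region is the region adjacent to the left edge; marked diagrams may carry at most one mark (dot) on each arc bounding the leftmost region. ${\mathbb{TLB}}_n(q,Q)$ is the algebra with basis the marked diagrams $n\to n$ (no loops), multiplied by concatenation with the rules: unmarked loop $\mapsto -(q+q^{-1})$, loop with one mark $\mapsto \frac qQ+\frac Qq$, an arc with two marks equals $-(Q+Q^{-1})$ times the arc with one mark. For $t\in\Lambda_B(n)=\{t: |t|\le n,\ t\equiv n\pmod 2\}$, the cell module $W_t(n)$ (for the cellular basis $C^t_{S,T}$ given by $D_2^*D_1$ for $t\ge0$ and $D_2^*(C_0\otimes I^{\otimes(|t|-1)})D_1$ for $t<0$) is the free module with basis the set $M(t)$ of monic diagrams $|t|\to n$ (i.e. with $|t|$ through strings) in which no through string is marked, with the induced action of ${\mathbb{TLB}}_n(q,Q)$. Here $C_0$ is a marked vertical strand, $I$ an unmarked one, $D^*$ the horizontal reflection of $D$. *)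

theory Defs
  imports Main
begin

text \<open>Boundary points of a Temperley--Lieb diagram with m bottom and n top points.
  Bot i is the (i+1)-st bottom point from the left, Top j the (j+1)-st top point.\<close>
datatype pt = Bot nat | Top nat

definition tl_points :: "nat \<Rightarrow> nat \<Rightarrow> pt set" where
  "tl_points m n = Bot ` {..<m} \<union> Top ` {..<n}"

text \<open>Position of a boundary point when the boundary of the rectangle is cut open at
  the left edge: top points left to right (0..n-1), then bottom points right to left
  (n..n+m-1). The left edge lies between the last and the first position.\<close>
fun tl_pos :: "nat \<Rightarrow> nat \<Rightarrow> pt \<Rightarrow> nat" where
  "tl_pos m n (Top j) = j"
| "tl_pos m n (Bot i) = n + (m - 1 - i)"

definition arc_lo :: "nat \<Rightarrow> nat \<Rightarrow> pt set \<Rightarrow> nat" where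
  "arc_lo m n e = Min (tl_pos m n ` e)"

definition arc_hi :: "nat \<Rightarrow> nat \<Rightarrow> pt set \<Rightarrow> nat" where
  "arc_hi m n e = Max (tl_pos m n ` e)"

definition arcs_cross :: "nat \<Rightarrow> nat \<Rightarrow> pt set \<Rightarrow> pt set \<Rightarrow> bool" where
  "arcs_cross m n e f \<longleftrightarrow>
     arc_lo m n e < arc_lo m n f \<and> arc_lo m n f < arc_hi m n e \<and> arc_hi m n e < arc_hi m n f"

text \<open>Arc e lies strictly inside arc f, i.e. f separates e from the left edge.\<close>
definition arc_nested_in :: "nat \<Rightarrow> nat \<Rightarrow> pt set \<Rightarrow> pt set \<Rightarrow> bool" where
  "arc_nested_in m n e f \<longleftrightarrow> arc_lo m n f < arc_lo m n e \<and> arc_hi m n e < arc_hi m n f"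

definition tl_diagram :: "nat \<Rightarrow> nat \<Rightarrow> pt set set \<Rightarrow> bool" where
  "tl_diagram m n D \<longleftrightarrow>
     (\<forall>e\<in>D. e \<subseteq> tl_points m n \<and> card e = 2) \<and>
     (\<forall>p\<in>tl_points m n. \<exists>!e. e \<in> D \<and> p \<in> e) \<and>
     (\<forall>e\<in>D. \<forall>f\<in>D. \<not> arcs_cross m n e f)"

text \<open>An arc bounds the leftmost region iff no other arc separates it from the left edge.\<close>
definition bounds_leftmost :: "nat \<Rightarrow> nat \<Rightarrow> pt set set \<Rightarrow> pt set \<Rightarrow> bool" where
  "bounds_leftmost m n D e \<longleftrightarrow> e \<in> D \<and> \<not> (\<exists>f\<in>D. arc_nested_in m n e f)"

definition through_string :: "pt set \<Rightarrow> bool" where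
  "through_string e \<longleftrightarrow> (\<exists>i j. e = {Bot i, Top j})"

text \<open>Marked diagram m \<rightarrow> n: a diagram D together with the set X of its marked arcs
  (at most one mark per arc), only arcs bounding the leftmost region being markable.\<close>
definition marked_diagram :: "nat \<Rightarrow> nat \<Rightarrow> pt set set \<times> pt set set \<Rightarrow> bool" where
  "marked_diagram m n DX \<longleftrightarrow>
     tl_diagram m n (fst DX) \<and> snd DX \<subseteq> {e. bounds_leftmost m n (fst DX) e}"

text \<open>M(t): monic marked diagrams |t| \<rightarrow> n (exactly |t| through strings) with no
  through string marked. This is the basis of the cell module W_t(n).\<close>
definition cell_basis :: "int \<Rightarrow> nat \<Rightarrow> (pt set set \<times> pt set set) set" where
  "cell_basis t n = {DX. marked_diagram (nat \<bar>t\<bar>) n DX \<and>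
       card {e \<in> fst DX. through_string e} = nat \<bar>t\<bar> \<and>
       (\<forall>e\<in>snd DX. \<not> through_string e)}"

text \<open>W_t(n) is the free module with basis M(t); its dimension (rank) is card M(t).\<close>
definition cell_module_dim :: "int \<Rightarrow> nat \<Rightarrow> nat" where
  "cell_module_dim t n = card (cell_basis t n)"

end

(* Cutting the boundary of the rectangle open at the left edge (tl_pos) turns a diagram
   m -> n into a non-crossing perfect matching of the positions 0, ..., n + m - 1, the first
   n of them being the top points; an arc bounds the leftmost region iff no arc encloses it.
   Exactly m through strings means that no arc joins two bottom points, i.e. every arc meets
   the top positions, and unmarked through strings means that marks sit on outer arcs between
   top points. Let w m n (marked_count m n) count these marked matchings. The last top point
   n - 1 and the first bottom point n are either joined by an arc, which can be deleted
   (w (m - 1) (n - 1)), or not; then the arc at n - 1 is enclosed by the arc at n, so n - 1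
   may be regarded as a bottom point (w (m + 1) (n - 1)). For m = 0 the arc at the last point
   is outer and is marked or not, so w 0 n = 2 w 1 (n - 1). These are the recurrences of
   w m (m + 2 k) = (m + 2 k) choose k. *)

theory Submission
  imports Defs
begin

section \<open>Non-crossing perfect matchings\<close>

definition perfect_matching :: "'a set \<Rightarrow> 'a set set \<Rightarrow> bool" where
  "perfect_matching P M \<longleftrightarrow>
     (\<forall>e\<in>M. e \<subseteq> P \<and> card e = 2) \<and> (\<forall>p\<in>P. \<exists>!e. e \<in> M \<and> p \<in> e)"

lemma perfect_matching_unique:
  "perfect_matching P M \<Longrightarrow> e \<in> M \<Longrightarrow> f \<in> M \<Longrightarrow> p \<in> e \<Longrightarrow> p \<in> f \<Longrightarrow> e = f"
  unfolding perfect_matching_def by blast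

lemma perfect_matching_cover:
  assumes "perfect_matching P M" "p \<in> P"
  obtains e where "e \<in> M" "p \<in> e"
  using assms unfolding perfect_matching_def by blast

lemma perfect_matching_arc:
  fixes P :: "'a::linorder set"
  assumes "perfect_matching P M" "e \<in> M"
  obtains a b where "e = {a, b}" "a < b" "a \<in> P" "b \<in> P"
proof -
  have "e \<subseteq> P" "card e = 2"
    using assms unfolding perfect_matching_def by blast+
  then show ?thesis
    using that by (auto simp: card_2_iff) (metis insert_commute linorder_neqE)
qed

lemma perfect_matching_image:
  assumes inj: "inj_on f P" and M: "perfect_matching P M"
  shows "perfect_matching (f ` P) ((`) f ` M)"
  unfolding perfect_matching_def
proof (intro conjI ballI)
  fix e' assume "e' \<in> (`) f ` M"
  then obtain e where e: "e \<in> M" "e' = f ` e" by blast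
  then have "e \<subseteq> P" "card e = 2"
    using M unfolding perfect_matching_def by blast+
  then show "e' \<subseteq> f ` P" "card e' = 2"
    using e inj by (auto simp: card_image inj_on_subset)
next
  fix q assume "q \<in> f ` P"
  then obtain p where p: "p \<in> P" "q = f p" by blast
  obtain e where e: "e \<in> M" "p \<in> e"
    using perfect_matching_cover[OF M p(1)] .
  show "\<exists>!e'. e' \<in> (`) f ` M \<and> q \<in> e'"
  proof
    show "f ` e \<in> (`) f ` M \<and> q \<in> f ` e" using e p by blast
  next
    fix e' assume "e' \<in> (`) f ` M \<and> q \<in> e'"
    then obtain g x where g: "g \<in> M" "e' = f ` g" "x \<in> g" "f x = f p"
      using p by blast
    have "g \<subseteq> P" using M g(1) unfolding perfect_matching_def by blast
    then have "x = p" using inj g p(1) by (auto dest: inj_onD)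
    then show "e' = f ` e"
      using perfect_matching_unique[OF M g(1) e(1)] g e by blast
  qed
qed

lemma perfect_matching_image_iff:
  assumes inj: "inj_on f P" and M: "M \<subseteq> Pow P"
  shows "perfect_matching (f ` P) ((`) f ` M) \<longleftrightarrow> perfect_matching P M"
proof
  let ?g = "the_inv_into P f"
  assume "perfect_matching (f ` P) ((`) f ` M)"
  then have "perfect_matching (?g ` f ` P) ((`) ?g ` (`) f ` M)"
    using perfect_matching_image inj_on_the_inv_into[OF inj] by blast
  moreover have "(`) ?g ` (`) f ` M = M"
  proof -
    have "?g ` f ` e = e" if "e \<subseteq> P" for e
      unfolding image_image using that the_inv_into_f_f[OF inj] by (simp add: subset_iff)
    then show ?thesis
      unfolding image_image using M by (simp add: subset_iff)
  qed
  ultimately show "perfect_matching P M"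
    using inj by simp
qed (rule perfect_matching_image[OF inj])

definition crossing :: "'a::linorder set \<Rightarrow> 'a set \<Rightarrow> bool" where
  "crossing e f \<longleftrightarrow> Min e < Min f \<and> Min f < Max e \<and> Max e < Max f"

definition nested_in :: "'a::linorder set \<Rightarrow> 'a set \<Rightarrow> bool" where
  "nested_in e f \<longleftrightarrow> Min f < Min e \<and> Max e < Max f"

lemma crossing_pair [simp]:
  "a < b \<Longrightarrow> u < v \<Longrightarrow> crossing {a, b} {u, v} \<longleftrightarrow> a < u \<and> u < b \<and> b < v"
  by (simp add: crossing_def)

lemma nested_in_pair [simp]:
  "a < b \<Longrightarrow> u < v \<Longrightarrow> nested_in {a, b} {u, v} \<longleftrightarrow> u < a \<and> b < v"
  by (simp add: nested_in_def)

lemma strict_mono_on_crossing_nested_in: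
  assumes h: "strict_mono_on P h" and e: "e = {a, b}" "a < b" "a \<in> P" "b \<in> P"
    and f: "f = {u, v}" "u < v" "u \<in> P" "v \<in> P"
  shows "crossing (h ` e) (h ` f) \<longleftrightarrow> crossing e f"
    and "nested_in (h ` e) (h ` f) \<longleftrightarrow> nested_in e f"
  using strict_mono_on_less[OF h] e f by auto

definition noncrossing_matching :: "'a::linorder set \<Rightarrow> 'a set set \<Rightarrow> bool" where
  "noncrossing_matching P M \<longleftrightarrow> perfect_matching P M \<and> (\<forall>e\<in>M. \<forall>f\<in>M. \<not> crossing e f)"

lemma noncrossing_matching_nested_inside:
  assumes M: "noncrossing_matching P M" and uv: "{u, v} \<in> M" "u < p" "p < v"
    and f: "f \<in> M" "p \<in> f"
  shows "nested_in f {u, v}"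
proof -
  have pm: "perfect_matching P M"
    using M by (simp add: noncrossing_matching_def)
  obtain a b where ab: "f = {a, b}" "a < b"
    using perfect_matching_arc[OF pm f(1)] by metis
  have "f \<noteq> {u, v}"
    using f uv by auto
  then have "a \<notin> {u, v}" "b \<notin> {u, v}"
    using perfect_matching_unique[OF pm f(1) uv(1)] ab by auto
  moreover have "\<not> crossing f {u, v}" "\<not> crossing {u, v} f"
    using M f(1) uv(1) by (auto simp: noncrossing_matching_def)
  ultimately show ?thesis
    using ab uv f(2) by auto
qed

lemma noncrossing_matching_remove_arc_iff:
  assumes c: "c \<in> M" "c \<subseteq> P" "card c = 2" and uncrossable: "\<And>f. \<not> crossing c f \<and> \<not> crossing f c"
  shows "noncrossing_matching P M \<longleftrightarrow> noncrossing_matching (P - c) (M - {c})"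
proof
  assume "noncrossing_matching P M"
  then have pm: "perfect_matching P M" and nc: "\<forall>e\<in>M. \<forall>f\<in>M. \<not> crossing e f"
    by (simp_all add: noncrossing_matching_def)
  have "e \<subseteq> P - c" if "e \<in> M - {c}" for e
    using that pm perfect_matching_unique[OF pm _ c(1)] unfolding perfect_matching_def by blast
  then have "perfect_matching (P - c) (M - {c})"
    using pm perfect_matching_unique[OF pm _ c(1)] unfolding perfect_matching_def by blast
  then show "noncrossing_matching (P - c) (M - {c})"
    using nc by (simp add: noncrossing_matching_def)
next
  assume "noncrossing_matching (P - c) (M - {c})"
  then have pm: "perfect_matching (P - c) (M - {c})" and nc: "\<forall>e\<in>M - {c}. \<forall>f\<in>M - {c}. \<not> crossing e f"
    by (simp_all add: noncrossing_matching_def)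
  have "perfect_matching P M"
    unfolding perfect_matching_def
  proof (intro conjI ballI)
    fix e assume "e \<in> M"
    then show "e \<subseteq> P" "card e = 2"
      using pm c unfolding perfect_matching_def by auto
  next
    fix p assume p: "p \<in> P"
    show "\<exists>!e. e \<in> M \<and> p \<in> e"
    proof (cases "p \<in> c")
      case True
      then show ?thesis
        using pm c(1) unfolding perfect_matching_def by blast
    next
      case False
      then show ?thesis
        using pm p c(1) unfolding perfect_matching_def by (metis DiffE DiffI singletonD)
    qed
  qed
  then show "noncrossing_matching P M"
    using nc uncrossable by (auto simp: noncrossing_matching_def)
qed

section \<open>Marked matchings\<close>

definition outer_arc :: "'a::linorder set set \<Rightarrow> 'a set \<Rightarrow> bool" where
  "outer_arc M e \<longleftrightarrow> e \<in> M \<and> \<not> (\<exists>f\<in>M. nested_in e f)"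

text \<open>The points of \<open>T\<close> play the top points: requiring every arc to meet \<open>T\<close> excludes arcs
  between two bottom points, and marks go only on outer arcs within \<open>T\<close>, never on through
  strings.\<close>
definition marked_matchings :: "'a::linorder set \<Rightarrow> 'a set \<Rightarrow> ('a set set \<times> 'a set set) set" where
  "marked_matchings P T = {(M, X). noncrossing_matching P M \<and> (\<forall>e\<in>M. e \<inter> T \<noteq> {}) \<and>
      X \<subseteq> {e. outer_arc M e \<and> e \<subseteq> T}}"

lemma marked_matchings_subset_Pow: "marked_matchings P T \<subseteq> Pow (Pow P) \<times> Pow (Pow P)"
  by (auto simp: marked_matchings_def noncrossing_matching_def perfect_matching_def outer_arc_def)

lemma finite_marked_matchings: "finite P \<Longrightarrow> finite (marked_matchings P T)"
  using marked_matchings_subset_Pow by (rule finite_subset) simp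

lemma marked_matchings_mono: "T \<subseteq> T' \<Longrightarrow> marked_matchings P T \<subseteq> marked_matchings P T'"
  unfolding marked_matchings_def by (auto 0 3)

definition relabel :: "('a \<Rightarrow> 'b) \<Rightarrow> 'a set set \<times> 'a set set \<Rightarrow> 'b set set \<times> 'b set set" where
  "relabel f = map_prod ((`) ((`) f)) ((`) ((`) f))"

lemma relabel_Pair [simp]: "relabel f (M, X) = ((`) f ` M, (`) f ` X)"
  by (simp add: relabel_def)

lemma inj_on_relabel: "inj_on f P \<Longrightarrow> inj_on (relabel f) (Pow (Pow P) \<times> Pow (Pow P))"
  unfolding relabel_def by (intro map_prod_inj_on inj_on_image_Pow)

lemma card_relabel_eq:
  assumes inj: "inj_on f P"
    and S: "S \<subseteq> Pow (Pow P) \<times> Pow (Pow P)"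
    and S': "S' \<subseteq> Pow (Pow (f ` P)) \<times> Pow (Pow (f ` P))"
    and iff: "\<And>a. a \<in> Pow (Pow P) \<times> Pow (Pow P) \<Longrightarrow> relabel f a \<in> S' \<longleftrightarrow> a \<in> S"
  shows "card S' = card S"
proof -
  let ?g = "the_inv_into P f"
  have inv_into: "(`) ?g ` E \<subseteq> Pow P" if "E \<subseteq> Pow (f ` P)" for E
    using that by (auto intro: the_inv_into_into[OF inj _ subset_refl])
  have inv_cancel: "(`) f ` (`) ?g ` E = E" if "E \<subseteq> Pow (f ` P)" for E
  proof -
    have "f ` ?g ` e = e" if "e \<subseteq> f ` P" for e
      unfolding image_image using that f_the_inv_into_f[OF inj] by (simp add: subset_iff)
    then show ?thesis
      unfolding image_image using that by (simp add: subset_iff)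
  qed
  have "S' \<subseteq> relabel f ` S"
  proof
    fix b assume b: "b \<in> S'"
    obtain M X where b_eq: "b = (M, X)" by fastforce
    have MX: "M \<subseteq> Pow (f ` P)" "X \<subseteq> Pow (f ` P)"
      using subsetD[OF S' b] by (simp_all add: b_eq)
    have "relabel ?g b \<in> Pow (Pow P) \<times> Pow (Pow P)"
      using inv_into[OF MX(1)] inv_into[OF MX(2)] by (simp add: b_eq)
    moreover have "relabel f (relabel ?g b) = b"
      using inv_cancel[OF MX(1)] inv_cancel[OF MX(2)] by (simp add: b_eq)
    ultimately show "b \<in> relabel f ` S"
      using iff b by (metis image_eqI)
  qed
  moreover have "relabel f ` S \<subseteq> S'"
    using iff S by auto
  ultimately have "S' = relabel f ` S" by blast
  then show ?thesis
    using card_image inj_on_subset[OF inj_on_relabel[OF inj] S] by metis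
qed

lemma relabel_strict_mono_in_marked_matchings_iff:
  assumes h: "strict_mono_on P h" and T: "T \<subseteq> P" and M: "M \<subseteq> Pow P" and X: "X \<subseteq> Pow P"
  shows "relabel h (M, X) \<in> marked_matchings (h ` P) (h ` T) \<longleftrightarrow> (M, X) \<in> marked_matchings P T"
proof -
  have inj: "inj_on h P"
    using h by (rule strict_mono_on_imp_inj_on)
  show ?thesis
  proof (cases "perfect_matching P M")
    case False
    then show ?thesis
      using perfect_matching_image_iff[OF inj M] by (simp add: marked_matchings_def noncrossing_matching_def)
  next
    case pm: True
    have arcs: "crossing (h ` e) (h ` f) \<longleftrightarrow> crossing e f" "nested_in (h ` e) (h ` f) \<longleftrightarrow> nested_in e f"
      if "e \<in> M" "f \<in> M" for e f
      using perfect_matching_arc[OF pm that(1)] perfect_matching_arc[OF pm that(2)]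
        strict_mono_on_crossing_nested_in[OF h] by metis+
    have image_subset: "h ` e \<subseteq> h ` T \<longleftrightarrow> e \<subseteq> T" if "e \<in> X" for e
      using inj_on_image_mem_iff[OF inj _ T] that X by blast
    have image_meets: "h ` e \<inter> h ` T \<noteq> {} \<longleftrightarrow> e \<inter> T \<noteq> {}" if "e \<in> M" for e
      using inj_on_image_Int[OF inj _ T, of e] that M by auto
    have outer: "outer_arc ((`) h ` M) (h ` e) \<longleftrightarrow> outer_arc M e" if "e \<in> X" for e
    proof -
      have "e \<subseteq> P"
        using that X by blast
      then have "h ` e \<in> (`) h ` M \<longleftrightarrow> e \<in> M"
        using inj_on_image_mem_iff[OF inj_on_image_Pow[OF inj], of e M] M by simp
      then show ?thesis
        using arcs by (auto simp: outer_arc_def)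
    qed
    show ?thesis
      using pm perfect_matching_image_iff[OF inj M]
      by (simp add: marked_matchings_def noncrossing_matching_def image_subset_iff[of _ X] subset_eq[of X]
          arcs image_meets outer image_subset)
  qed
qed

lemma card_marked_matchings_strict_mono_image:
  assumes h: "strict_mono_on P h" and T: "T \<subseteq> P"
  shows "card (marked_matchings (h ` P) (h ` T)) = card (marked_matchings P T)"
proof (rule card_relabel_eq[OF strict_mono_on_imp_inj_on[OF h]
      marked_matchings_subset_Pow marked_matchings_subset_Pow])
  fix a assume "a \<in> Pow (Pow P) \<times> Pow (Pow P)"
  then show "relabel h a \<in> marked_matchings (h ` P) (h ` T) \<longleftrightarrow> a \<in> marked_matchings P T"
    using relabel_strict_mono_in_marked_matchings_iff[OF h T] by (cases a) simp
qed

section \<open>Counting marked matchings\<close>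

definition marked_count :: "nat \<Rightarrow> nat \<Rightarrow> nat" where
  "marked_count m n = card (marked_matchings {..<n + m} {..<n})"

lemma adjacent_arc_not_crossing: "\<not> crossing {n, Suc n} f \<and> \<not> crossing f {n, Suc n}"
  by (auto simp: crossing_def)

lemma marked_matchings_remove_adjacent_arc_iff:
  fixes n :: nat
  assumes "{n, Suc n} \<subseteq> P" and "{n, Suc n} \<in> M"
  shows "(M, X) \<in> marked_matchings P {..<Suc n} \<longleftrightarrow>
    (M - {{n, Suc n}}, X) \<in> marked_matchings (P - {n, Suc n}) {..<n}"
proof -
  define c where "c = {n, Suc n}"
  have cP: "c \<subseteq> P" and cM: "c \<in> M"
    using assms by (simp_all add: c_def)
  have "card c = 2"
    by (simp add: c_def)
  then have nc_iff: "noncrossing_matching P M \<longleftrightarrow> noncrossing_matching (P - c) (M - {c})"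
    by (rule noncrossing_matching_remove_arc_iff[OF cM cP]) (simp add: c_def adjacent_arc_not_crossing)
  show ?thesis
  proof (cases "noncrossing_matching P M")
    case False
    then show ?thesis
      using nc_iff by (simp add: marked_matchings_def flip: c_def)
  next
    case nc: True
    then have pm: "perfect_matching P M"
      by (simp add: noncrossing_matching_def)
    have below: "e \<inter> {..<Suc n} = e \<inter> {..<n}" if "e \<in> M - {c}" for e
    proof -
      have "n \<notin> e"
        using perfect_matching_unique[OF pm _ cM, of e n] that by (auto simp: c_def)
      then show ?thesis
        by (auto simp: less_Suc_eq)
    qed
    have outer: "outer_arc M e \<longleftrightarrow> outer_arc (M - {c}) e" if "e \<noteq> c" for e
    proof -
      have "\<not> nested_in e c" if eM: "e \<in> M" for e
      proof -
        obtain a b where "e = {a, b}" "a < b"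
          using perfect_matching_arc[OF pm eM] by metis
        then show ?thesis
          by (auto simp: c_def)
      qed
      then show ?thesis
        using \<open>e \<noteq> c\<close> by (auto simp: outer_arc_def)
    qed
    have c_meets: "c \<inter> {..<Suc n} \<noteq> {}"
      by (simp add: c_def)
    have meets: "(\<forall>e\<in>M. e \<inter> {..<Suc n} \<noteq> {}) \<longleftrightarrow> (\<forall>e\<in>M - {c}. e \<inter> {..<n} \<noteq> {})"
    proof
      assume "\<forall>e\<in>M. e \<inter> {..<Suc n} \<noteq> {}"
      then show "\<forall>e\<in>M - {c}. e \<inter> {..<n} \<noteq> {}"
        using below by (metis DiffD1)
    next
      assume rest: "\<forall>e\<in>M - {c}. e \<inter> {..<n} \<noteq> {}"
      show "\<forall>e\<in>M. e \<inter> {..<Suc n} \<noteq> {}"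
      proof
        fix e assume "e \<in> M"
        then show "e \<inter> {..<Suc n} \<noteq> {}"
          using rest below c_meets by (cases "e = c") auto
      qed
    qed
    have "outer_arc M e \<and> e \<subseteq> {..<Suc n} \<longleftrightarrow> outer_arc (M - {c}) e \<and> e \<subseteq> {..<n}" for e
    proof (cases "e \<in> M - {c}")
      case True
      then show ?thesis
        using outer below[OF True] by blast
    next
      case False
      then show ?thesis
        by (auto simp: c_def outer_arc_def)
    qed
    then have marks: "X \<subseteq> {e. outer_arc M e \<and> e \<subseteq> {..<Suc n}} \<longleftrightarrow>
        X \<subseteq> {e. outer_arc (M - {c}) e \<and> e \<subseteq> {..<n}}"
      by blast
    show ?thesis
      using nc nc_iff meets marks by (simp add: marked_matchings_def flip: c_def)
  qed
qed

lemma card_containing_arc_eq: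
  assumes remove_iff: "\<And>M X. c \<in> M \<Longrightarrow> (M, X) \<in> S \<longleftrightarrow> (M - {c}, X) \<in> S'"
    and c_notin: "\<And>M X. (M, X) \<in> S' \<Longrightarrow> c \<notin> M"
  shows "card {a \<in> S. c \<in> fst a} = card S'"
proof -
  let ?insert = "\<lambda>(M, X). (insert c M, X)"
  have "inj_on ?insert S'"
  proof (rule inj_onI)
    fix a b assume "a \<in> S'" "b \<in> S'" "?insert a = ?insert b"
    then show "a = b"
      using c_notin by (cases a; cases b) (metis Diff_insert_absorb prod.inject case_prod_conv)
  qed
  moreover have "?insert ` S' = {a \<in> S. c \<in> fst a}"
  proof (intro equalityI subsetI)
    fix a assume "a \<in> ?insert ` S'"
    then obtain M X where a: "a = (insert c M, X)" "(M, X) \<in> S'"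
      by auto
    then have "insert c M - {c} = M"
      using c_notin by auto
    then show "a \<in> {a \<in> S. c \<in> fst a}"
      using a remove_iff[of "insert c M" X] by simp
  next
    fix a assume "a \<in> {a \<in> S. c \<in> fst a}"
    then obtain M X where a: "a = (M, X)" "(M, X) \<in> S" "c \<in> M"
      by (cases a) auto
    then have "(M - {c}, X) \<in> S'"
      using remove_iff by blast
    moreover have "a = ?insert (M - {c}, X)"
      using a by (simp add: insert_absorb)
    ultimately show "a \<in> ?insert ` S'"
      by (rule rev_image_eqI)
  qed
  ultimately show ?thesis
    using card_image by fastforce
qed

lemma card_marked_matchings_Diff_adjacent:
  "card (marked_matchings ({..<Suc n + Suc m} - {n, Suc n}) {..<n}) = marked_count m n"
proof -
  define h where "h p = (if p < n then p else Suc (Suc p))" for p :: nat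
  have "strict_mono_on {..<n + m} h"
    by (auto simp: h_def strict_mono_on_def)
  moreover have "h ` {..<n + m} = {..<Suc n + Suc m} - {n, Suc n}"
  proof (intro equalityI subsetI)
    fix p assume "p \<in> {..<Suc n + Suc m} - {n, Suc n}"
    then have "p < n + m \<and> h p = p \<or> p - 2 < n + m \<and> h (p - 2) = p"
      by (auto simp: h_def)
    then show "p \<in> h ` {..<n + m}"
      by (auto intro: rev_image_eqI)
  qed (auto simp: h_def)
  moreover have "h ` {..<n} = {..<n}"
    by (auto simp: h_def)
  ultimately show ?thesis
    using card_marked_matchings_strict_mono_image[of "{..<n + m}" h "{..<n}"]
    by (simp add: marked_count_def)
qed

lemma card_marked_matchings_with_adjacent_arc:
  "card {a \<in> marked_matchings {..<Suc n + Suc m} {..<Suc n}. {n, Suc n} \<in> fst a} = marked_count m n"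
proof -
  let ?P = "{..<Suc n + Suc m}"
  have "card {a \<in> marked_matchings ?P {..<Suc n}. {n, Suc n} \<in> fst a} =
      card (marked_matchings (?P - {n, Suc n}) {..<n})"
  proof (rule card_containing_arc_eq)
    fix M X assume "{n, Suc n} \<in> M"
    then show "(M, X) \<in> marked_matchings ?P {..<Suc n} \<longleftrightarrow>
        (M - {{n, Suc n}}, X) \<in> marked_matchings (?P - {n, Suc n}) {..<n}"
      by (intro marked_matchings_remove_adjacent_arc_iff) auto
  next
    fix M X assume "(M, X) \<in> marked_matchings (?P - {n, Suc n}) {..<n}"
    then show "{n, Suc n} \<notin> M"
      using marked_matchings_subset_Pow by blast
  qed
  then show ?thesis
    using card_marked_matchings_Diff_adjacent by simp
qed

lemma partner_of_first_bottom:
  assumes a: "(M, X) \<in> marked_matchings {..<Suc n + Suc m} {..<Suc n}" and c: "{n, Suc n} \<notin> M"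
  obtains j where "{j, Suc n} \<in> M" "j < n"
proof -
  have pm: "perfect_matching {..<Suc n + Suc m} M" and meets: "\<forall>e\<in>M. e \<inter> {..<Suc n} \<noteq> {}"
    using a by (simp_all add: marked_matchings_def noncrossing_matching_def)
  obtain e where e: "e \<in> M" "Suc n \<in> e"
    using perfect_matching_cover[OF pm, of "Suc n"] by auto
  obtain u v where uv: "e = {u, v}" "u < v"
    using perfect_matching_arc[OF pm e(1)] by metis
  have "e \<inter> {..<Suc n} \<noteq> {}"
    using meets e(1) by blast
  then have "v = Suc n" "u \<le> n"
    using e(2) uv by auto
  moreover have "u \<noteq> n"
    using c e(1) uv \<open>v = Suc n\<close> by auto
  ultimately show ?thesis
    using that e(1) uv by simp
qed

lemma marked_matchings_without_adjacent_arc: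
  "{a \<in> marked_matchings {..<Suc n + Suc m} {..<Suc n}. {n, Suc n} \<notin> fst a} =
    marked_matchings {..<Suc n + Suc m} {..<n}"
  (is "?L = ?R")
proof (intro equalityI subsetI)
  fix a assume a: "a \<in> ?R"
  obtain M X where MX: "a = (M, X)"
    by fastforce
  have "{n, Suc n} \<inter> {..<n} = {}"
    by auto
  then have "{n, Suc n} \<notin> M"
    using a by (auto simp: MX marked_matchings_def)
  then show "a \<in> ?L"
    using a marked_matchings_mono[of "{..<n}" "{..<Suc n}"] by (auto simp: MX)
next
  fix a assume "a \<in> ?L"
  then obtain M X where a: "a = (M, X)" "(M, X) \<in> marked_matchings {..<Suc n + Suc m} {..<Suc n}"
    "{n, Suc n} \<notin> M"
    by (cases a) auto
  have nc: "noncrossing_matching {..<Suc n + Suc m} M" and meets: "\<forall>e\<in>M. e \<inter> {..<Suc n} \<noteq> {}"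
    and marks: "X \<subseteq> {e. outer_arc M e \<and> e \<subseteq> {..<Suc n}}"
    using a(2) by (simp_all add: marked_matchings_def)
  have pm: "perfect_matching {..<Suc n + Suc m} M"
    using nc by (simp add: noncrossing_matching_def)
  obtain j where j: "{j, Suc n} \<in> M" "j < n"
    using partner_of_first_bottom[OF a(2,3)] .
  \<comment> \<open>The arc at \<open>n\<close> lies inside the arc at \<open>Suc n\<close>, so \<open>n\<close> behaves like a bottom point.\<close>
  have inside: "nested_in f {j, Suc n}" if "f \<in> M" "n \<in> f" for f
    using noncrossing_matching_nested_inside[OF nc j(1) j(2) _ that] by simp
  have "f \<inter> {..<n} \<noteq> {}" if f: "f \<in> M" for f
  proof (cases "n \<in> f")
    case True
    obtain x y where "f = {x, y}" "x < y"
      using perfect_matching_arc[OF pm f] by metis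
    then show ?thesis
      using inside[OF f True] j(2) by auto
  next
    case False
    then have "f \<inter> {..<Suc n} = f \<inter> {..<n}"
      by (auto simp: less_Suc_eq)
    then show ?thesis
      using meets f by auto
  qed
  moreover have "X \<subseteq> {e. outer_arc M e \<and> e \<subseteq> {..<n}}"
  proof
    fix f assume "f \<in> X"
    then have f: "outer_arc M f" "f \<subseteq> {..<Suc n}"
      using marks by auto
    then have "n \<notin> f"
      using inside j(1) by (auto simp: outer_arc_def)
    then show "f \<in> {e. outer_arc M e \<and> e \<subseteq> {..<n}}"
      using f by (auto simp: less_Suc_eq)
  qed
  ultimately show "a \<in> ?R"
    using a(1) nc by (simp add: marked_matchings_def)
qed

lemma card_filter_add_card_filter_not:
  "finite S \<Longrightarrow> card {a \<in> S. Q a} + card {a \<in> S. \<not> Q a} = card S"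
  using card_Int_Diff[of S "Collect Q"] by (simp add: Collect_conj_eq set_diff_eq Int_commute)

lemma marked_count_Suc_Suc:
  "marked_count (Suc m) (Suc n) = marked_count m n + marked_count (Suc (Suc m)) n"
proof -
  let ?S = "marked_matchings {..<Suc n + Suc m} {..<Suc n}"
  have "marked_count (Suc m) (Suc n) = card {a \<in> ?S. {n, Suc n} \<in> fst a} + card {a \<in> ?S. {n, Suc n} \<notin> fst a}"
    unfolding marked_count_def
    by (rule card_filter_add_card_filter_not[symmetric]) (simp add: finite_marked_matchings)
  also have "\<dots> = marked_count m n + marked_count (Suc (Suc m)) n"
    unfolding card_marked_matchings_with_adjacent_arc marked_matchings_without_adjacent_arc
    by (simp add: marked_count_def)
  finally show ?thesis .
qed

lemma outer_arc_through_last: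
  assumes pm: "perfect_matching {..<Suc n} M" and e: "e \<in> M" "n \<in> e"
  shows "outer_arc M e"
proof -
  have "\<not> nested_in e f" if f: "f \<in> M" for f
  proof -
    obtain a b where "e = {a, b}" "a < b" "b \<in> {..<Suc n}"
      using perfect_matching_arc[OF pm e(1)] by metis
    moreover obtain u v where "f = {u, v}" "u < v" "v \<in> {..<Suc n}"
      using perfect_matching_arc[OF pm f] by metis
    ultimately show ?thesis
      using e(2) by auto
  qed
  then show ?thesis
    using e(1) by (auto simp: outer_arc_def)
qed

lemma marked_matchings_unmarked_at_last:
  "{a \<in> marked_matchings {..<Suc n} {..<Suc n}. \<forall>e\<in>snd a. n \<notin> e} = marked_matchings {..<Suc n} {..<n}"
  (is "?L = ?R")
proof (intro equalityI subsetI)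
  fix a assume "a \<in> ?L"
  then obtain M X where a: "a = (M, X)" "(M, X) \<in> marked_matchings {..<Suc n} {..<Suc n}"
    "\<forall>e\<in>X. n \<notin> e"
    by (cases a) auto
  then have nc: "noncrossing_matching {..<Suc n} M" and marks: "X \<subseteq> {e. outer_arc M e \<and> e \<subseteq> {..<Suc n}}"
    by (auto simp: marked_matchings_def)
  have pm: "perfect_matching {..<Suc n} M"
    using nc by (simp add: noncrossing_matching_def)
  have "e \<inter> {..<n} \<noteq> {}" if e: "e \<in> M" for e
  proof -
    obtain u v where "e = {u, v}" "u < v" "v \<in> {..<Suc n}"
      using perfect_matching_arc[OF pm e] by metis
    then show ?thesis
      by auto
  qed
  moreover have "X \<subseteq> {e. outer_arc M e \<and> e \<subseteq> {..<n}}"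
    using marks a(3) by (force simp: less_Suc_eq)
  ultimately show "a \<in> ?R"
    using a(1) nc by (simp add: marked_matchings_def)
next
  fix a assume a: "a \<in> ?R"
  then have "a \<in> marked_matchings {..<Suc n} {..<Suc n}"
    using marked_matchings_mono[of "{..<n}" "{..<Suc n}"] by auto
  moreover have "\<forall>e\<in>snd a. n \<notin> e"
    using a by (auto simp: marked_matchings_def)
  ultimately show "a \<in> ?L"
    by blast
qed

lemma card_marked_matchings_marked_at_last:
  "card {a \<in> marked_matchings {..<Suc n} {..<Suc n}. \<exists>e\<in>snd a. n \<in> e} = card (marked_matchings {..<Suc n} {..<n})"
proof -
  let ?S = "marked_matchings {..<Suc n} {..<Suc n}"
  let ?A = "{a \<in> ?S. \<exists>e\<in>snd a. n \<in> e}"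
  let ?unmark = "\<lambda>(M, X). (M, {e \<in> X. n \<notin> e})"
  have "inj_on ?unmark ?A"
  proof (rule inj_onI)
    fix a b assume a: "a \<in> ?A" and b: "b \<in> ?A" and eq: "?unmark a = ?unmark b"
    obtain M X Y where ab: "a = (M, X)" "b = (M, Y)" and XY: "{e \<in> X. n \<notin> e} = {e \<in> Y. n \<notin> e}"
      using eq by (cases a; cases b) auto
    have pm: "perfect_matching {..<Suc n} M" and "X \<subseteq> M" "Y \<subseteq> M"
      using a b by (auto simp: ab marked_matchings_def noncrossing_matching_def outer_arc_def)
    then have "e = f" if "e \<in> X \<union> Y" "f \<in> X \<union> Y" "n \<in> e" "n \<in> f" for e f
      using perfect_matching_unique[OF pm] that by blast
    moreover obtain e f where "e \<in> X" "n \<in> e" "f \<in> Y" "n \<in> f"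
      using a b ab by auto
    ultimately have "X = Y"
      using XY by blast
    then show "a = b"
      using ab by simp
  qed
  moreover have "?unmark ` ?A = marked_matchings {..<Suc n} {..<n}"
  proof (intro equalityI subsetI)
    fix b assume "b \<in> ?unmark ` ?A"
    then obtain M X where b: "b = (M, {e \<in> X. n \<notin> e})" "(M, X) \<in> ?S"
      by auto
    then have "(M, {e \<in> X. n \<notin> e}) \<in> {a \<in> ?S. \<forall>e\<in>snd a. n \<notin> e}"
      by (auto simp: marked_matchings_def)
    then show "b \<in> marked_matchings {..<Suc n} {..<n}"
      by (simp only: marked_matchings_unmarked_at_last b(1))
  next
    fix b assume b: "b \<in> marked_matchings {..<Suc n} {..<n}"
    obtain M X where MX: "b = (M, X)"
      by fastforce
    have pm: "perfect_matching {..<Suc n} M"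
      using b by (simp add: MX marked_matchings_def noncrossing_matching_def)
    obtain e where e: "e \<in> M" "n \<in> e"
      using perfect_matching_cover[OF pm, of n] by auto
    have "e \<subseteq> {..<Suc n}"
      using pm e(1) by (simp add: perfect_matching_def)
    moreover have "(M, X) \<in> ?S"
      using b marked_matchings_mono[of "{..<n}" "{..<Suc n}"] by (auto simp: MX)
    ultimately have "(M, insert e X) \<in> ?S"
      using outer_arc_through_last[OF pm e] by (simp add: marked_matchings_def)
    then have "(M, insert e X) \<in> ?A"
      using e(2) by auto
    moreover have "{f \<in> insert e X. n \<notin> f} = X"
      using b e(2) by (auto simp: MX marked_matchings_def)
    ultimately show "b \<in> ?unmark ` ?A"
      by (auto simp: MX intro: rev_image_eqI)
  qed
  ultimately show ?thesis
    using card_image[of ?unmark ?A] by simp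
qed

lemma marked_count_0_Suc: "marked_count 0 (Suc n) = 2 * marked_count 1 n"
proof -
  let ?S = "marked_matchings {..<Suc n} {..<Suc n}"
  have "marked_count 0 (Suc n) = card {a \<in> ?S. \<exists>e\<in>snd a. n \<in> e} + card {a \<in> ?S. \<not> (\<exists>e\<in>snd a. n \<in> e)}"
    unfolding marked_count_def add_0_right
    by (rule card_filter_add_card_filter_not[symmetric]) (simp add: finite_marked_matchings)
  also have "\<dots> = 2 * marked_count 1 n"
    using card_marked_matchings_marked_at_last[of n] marked_matchings_unmarked_at_last[of n]
    by (simp add: marked_count_def)
  finally show ?thesis .
qed

lemma marked_count_0_0: "marked_count 0 0 = 1"
proof -
  have "marked_matchings {..<0::nat} {..<0} = {({}, {})}"
    by (auto simp: marked_matchings_def noncrossing_matching_def perfect_matching_def outer_arc_def)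
  then show ?thesis
    by (simp add: marked_count_def)
qed

lemma marked_count_Suc_0: "marked_count (Suc m) 0 = 0"
proof -
  have "marked_matchings {..<Suc m} {..<0} = {}"
  proof (rule ccontr)
    assume "marked_matchings {..<Suc m} {..<0} \<noteq> {}"
    then obtain M X where "noncrossing_matching {..<Suc m} M" "\<forall>e\<in>M. e \<inter> {..<0} \<noteq> {}"
      by (auto simp: marked_matchings_def)
    then show False
      by (metis empty_iff inf_bot_right lessThan_0 lessThan_iff noncrossing_matching_def
          perfect_matching_cover zero_less_Suc)
  qed
  then show ?thesis
    by (simp add: marked_count_def)
qed

lemma marked_count_eq_0: "n < m \<Longrightarrow> marked_count m n = 0"
proof (induction n arbitrary: m)
  case 0
  then show ?case
    using marked_count_Suc_0 by (metis gr0_implies_Suc)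
next
  case (Suc n)
  then obtain m' where "m = Suc m'"
    by (metis Suc_lessE)
  then show ?case
    using Suc marked_count_Suc_Suc[of m' n] by simp
qed

lemma marked_count_binomial: "marked_count m (m + 2 * k) = (m + 2 * k) choose k"
proof (induction "m + 2 * k" arbitrary: m k)
  case 0
  then show ?case
    by (simp add: marked_count_0_0)
next
  case (Suc N)
  note IH = Suc.hyps(1) and N = Suc.hyps(2)
  show ?case
  proof (cases m)
    case 0
    then obtain k' where k: "k = Suc k'" and N': "N = 1 + 2 * k'"
      using N by (cases k) auto
    have "marked_count m (m + 2 * k) = 2 * marked_count 1 N"
      using marked_count_0_Suc[of N] N 0 by simp
    also have "marked_count 1 N = N choose k'"
      using IH[of 1 k'] N' by simp
    also have "2 * (N choose k') = Suc N choose k"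
      using binomial_symmetric[of k' N] N' by (simp add: k)
    finally show ?thesis
      using N by simp
  next
    case (Suc m')
    have "marked_count m (m + 2 * k) = marked_count m' N + marked_count (Suc (Suc m')) N"
      using marked_count_Suc_Suc[of m' N] N Suc by simp
    also have "marked_count m' N = N choose k"
      using IH N Suc by simp
    also have "marked_count (Suc (Suc m')) N = (if k = 0 then 0 else N choose (k - 1))"
    proof (cases k)
      case 0
      then show ?thesis
        using marked_count_eq_0 N Suc by simp
    next
      case (Suc k')
      then show ?thesis
        using IH[of "Suc (Suc m')" k'] N \<open>m = Suc m'\<close> by simp
    qed
    finally show ?thesis
      using N by (cases k) simp_all
  qed
qed

section \<open>Temperley--Lieb diagrams as matchings\<close>

lemma inj_on_tl_pos: "inj_on (tl_pos m n) (tl_points m n)"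
  by (rule inj_onI) (auto simp: tl_points_def)

lemma tl_pos_image: "tl_pos m n ` tl_points m n = {..<n + m}"
proof (intro equalityI subsetI)
  fix p assume p: "p \<in> {..<n + m}"
  show "p \<in> tl_pos m n ` tl_points m n"
  proof (cases "p < n")
    case True
    then show ?thesis
      by (auto simp: tl_points_def intro: rev_image_eqI[of "Top p"])
  next
    case False
    then show ?thesis
      using p by (auto simp: tl_points_def intro!: rev_image_eqI[of "Bot (n + m - 1 - p)"])
  qed
qed (auto simp: tl_points_def)

lemma tl_pos_less_iff_Top: "x \<in> tl_points m n \<Longrightarrow> tl_pos m n x < n \<longleftrightarrow> (\<exists>j. x = Top j)"
  by (auto simp: tl_points_def)

lemma arcs_cross_iff_crossing: "arcs_cross m n e f \<longleftrightarrow> crossing (tl_pos m n ` e) (tl_pos m n ` f)"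
  by (simp add: arcs_cross_def crossing_def arc_lo_def arc_hi_def)

lemma arc_nested_in_iff_nested_in: "arc_nested_in m n e f \<longleftrightarrow> nested_in (tl_pos m n ` e) (tl_pos m n ` f)"
  by (simp add: arc_nested_in_def nested_in_def arc_lo_def arc_hi_def)

lemma tl_diagram_iff_noncrossing_matching:
  assumes "D \<subseteq> Pow (tl_points m n)"
  shows "tl_diagram m n D \<longleftrightarrow> noncrossing_matching {..<n + m} ((`) (tl_pos m n) ` D)"
proof -
  have "tl_diagram m n D \<longleftrightarrow> perfect_matching (tl_points m n) D \<and> (\<forall>e\<in>D. \<forall>f\<in>D. \<not> arcs_cross m n e f)"
    by (simp add: tl_diagram_def perfect_matching_def)
  then show ?thesis
    using perfect_matching_image_iff[OF inj_on_tl_pos assms]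
    by (simp add: noncrossing_matching_def tl_pos_image arcs_cross_iff_crossing)
qed

lemma through_string_iff:
  "card e = 2 \<Longrightarrow> through_string e \<longleftrightarrow> (\<exists>i. Bot i \<in> e) \<and> (\<exists>j. Top j \<in> e)"
  by (auto simp: through_string_def card_2_iff)

lemma arc_bottom_count:
  assumes "card e = 2"
  shows "(if through_string e then 1 else 0) \<le> card (e \<inter> range Bot)"
    and "card (e \<inter> range Bot) = (if through_string e then 1 else 0) \<longleftrightarrow> (\<exists>j. Top j \<in> e)"
proof -
  obtain x y where xy: "e = {x, y}" "x \<noteq> y"
    using assms by (auto simp: card_2_iff)
  have "through_string e \<longleftrightarrow> card (e \<inter> range Bot) = 1"
    and "card (e \<inter> range Bot) = 2 \<longleftrightarrow> (\<nexists>j. Top j \<in> e)"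
    using xy by (cases x; cases y; auto simp: through_string_def doubleton_eq_iff Int_insert_left)+
  moreover have "card (e \<inter> range Bot) \<le> 2"
    using assms by (metis card_mono finite_insert finite.emptyI inf_le1 xy(1))
  ultimately show "(if through_string e then 1 else 0) \<le> card (e \<inter> range Bot)"
    "card (e \<inter> range Bot) = (if through_string e then 1 else 0) \<longleftrightarrow> (\<exists>j. Top j \<in> e)"
    by auto
qed

lemma card_through_strings_eq_iff:
  assumes D: "tl_diagram m n D"
  shows "card {e \<in> D. through_string e} = m \<longleftrightarrow> (\<forall>e\<in>D. \<exists>j. Top j \<in> e)"
proof -
  \<comment> \<open>Count bottom points: a through string has one of them, an arc between bottom points two.\<close>
  let ?B = "Bot ` {..<m}"
  let ?through = "\<lambda>e. if through_string e then 1 else 0 :: nat"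
  have pm: "perfect_matching (tl_points m n) D"
    using D by (simp add: tl_diagram_def perfect_matching_def)
  have arcs: "e \<subseteq> tl_points m n" "card e = 2" if "e \<in> D" for e
    using pm that by (auto simp: perfect_matching_def)
  have fin: "finite D"
    using arcs(1) by (intro finite_subset[of D "Pow (tl_points m n)"]) (auto simp: tl_points_def)
  have "?B = (\<Union>e\<in>D. e \<inter> ?B)"
    using pm by (auto simp: tl_points_def elim: perfect_matching_cover)
  moreover have "card ?B = m"
    by (simp add: card_image inj_on_def)
  ultimately have "m = card (\<Union>e\<in>D. e \<inter> ?B)"
    by metis
  also have "\<dots> = (\<Sum>e\<in>D. card (e \<inter> ?B))"
    using perfect_matching_unique[OF pm] by (intro card_UN_disjoint[OF fin]) blast+
  finally have bottoms: "m = (\<Sum>e\<in>D. card (e \<inter> ?B))" .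
  have throughs: "card {e \<in> D. through_string e} = (\<Sum>e\<in>D. ?through e)"
    using fin by (simp add: sum.If_cases Int_def)
  have le: "?through e \<le> card (e \<inter> ?B)"
    and eq_iff: "card (e \<inter> ?B) = ?through e \<longleftrightarrow> (\<exists>j. Top j \<in> e)" if e: "e \<in> D" for e
  proof -
    have "e \<inter> ?B = e \<inter> range Bot"
      using arcs(1)[OF e] by (auto simp: tl_points_def)
    then show "?through e \<le> card (e \<inter> ?B)" "card (e \<inter> ?B) = ?through e \<longleftrightarrow> (\<exists>j. Top j \<in> e)"
      using arc_bottom_count[OF arcs(2)[OF e]] by simp_all
  qed
  show ?thesis
  proof
    assume "card {e \<in> D. through_string e} = m"
    then have "(\<Sum>e\<in>D. ?through e) = (\<Sum>e\<in>D. card (e \<inter> ?B))"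
      using bottoms throughs by simp
    show "\<forall>e\<in>D. \<exists>j. Top j \<in> e"
    proof (rule ccontr)
      assume "\<not> (\<forall>e\<in>D. \<exists>j. Top j \<in> e)"
      then obtain e where e: "e \<in> D" "\<nexists>j. Top j \<in> e"
        by blast
      then have "card (e \<inter> ?B) \<noteq> ?through e"
        using eq_iff[OF e(1)] e(2) by simp
      then have "?through e < card (e \<inter> ?B)"
        using le[OF e(1)] by linarith
      then have "\<exists>a\<in>D. ?through a < card (a \<inter> ?B)"
        using e(1) by blast
      then have "(\<Sum>e\<in>D. ?through e) < (\<Sum>e\<in>D. card (e \<inter> ?B))"
        using le by (intro sum_strict_mono_ex1[OF fin] ballI)
      then show False
        using \<open>(\<Sum>e\<in>D. ?through e) = (\<Sum>e\<in>D. card (e \<inter> ?B))\<close> by simp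
    qed
  next
    assume "\<forall>e\<in>D. \<exists>j. Top j \<in> e"
    then have "(\<Sum>e\<in>D. ?through e) = (\<Sum>e\<in>D. card (e \<inter> ?B))"
      using eq_iff by (intro sum.cong) auto
    then show "card {e \<in> D. through_string e} = m"
      using bottoms throughs by simp
  qed
qed

lemma outer_arc_image_tl_pos_iff:
  assumes D: "D \<subseteq> Pow (tl_points m n)" and e: "e \<subseteq> tl_points m n"
  shows "outer_arc ((`) (tl_pos m n) ` D) (tl_pos m n ` e) \<longleftrightarrow> bounds_leftmost m n D e"
proof -
  have "tl_pos m n ` e \<in> (`) (tl_pos m n) ` D \<longleftrightarrow> e \<in> D"
    using inj_on_image_mem_iff[OF inj_on_image_Pow[OF inj_on_tl_pos], where a=e and A=D] e D
    by simp
  then show ?thesis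
    by (auto simp: outer_arc_def bounds_leftmost_def arc_nested_in_iff_nested_in)
qed

lemma tl_pos_image_subset_top_iff:
  assumes e: "e \<subseteq> tl_points m n" "card e = 2" and top: "\<exists>j. Top j \<in> e"
  shows "tl_pos m n ` e \<subseteq> {..<n} \<longleftrightarrow> \<not> through_string e"
proof -
  have "tl_pos m n ` e \<subseteq> {..<n} \<longleftrightarrow> (\<forall>x\<in>e. \<exists>j. x = Top j)"
    by (simp add: image_subset_iff tl_pos_less_iff_Top subsetD[OF e(1)])
  also have "\<dots> \<longleftrightarrow> \<not> (\<exists>i. Bot i \<in> e)"
    by (metis pt.exhaust pt.distinct(1))
  also have "\<dots> \<longleftrightarrow> \<not> through_string e"
    using through_string_iff[OF e(2)] top by blast
  finally show ?thesis .
qed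

lemma relabel_tl_pos_in_marked_matchings_iff:
  fixes t :: int
  assumes m: "m = nat \<bar>t\<bar>" and D: "D \<subseteq> Pow (tl_points m n)" and X: "X \<subseteq> Pow (tl_points m n)"
  shows "relabel (tl_pos m n) (D, X) \<in> marked_matchings {..<n + m} {..<n} \<longleftrightarrow> (D, X) \<in> cell_basis t n"
proof -
  let ?\<phi> = "tl_pos m n"
  have meets_iff: "?\<phi> ` e \<inter> {..<n} \<noteq> {} \<longleftrightarrow> (\<exists>j. Top j \<in> e)" if "e \<in> D" for e
    using that D tl_pos_less_iff_Top[of _ m n] by blast
  show ?thesis
  proof (cases "tl_diagram m n D \<and> (\<forall>e\<in>D. \<exists>j. Top j \<in> e)")
    case False
    have "relabel ?\<phi> (D, X) \<notin> marked_matchings {..<n + m} {..<n}"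
    proof
      assume "relabel ?\<phi> (D, X) \<in> marked_matchings {..<n + m} {..<n}"
      then have "noncrossing_matching {..<n + m} ((`) ?\<phi> ` D)" "\<forall>e\<in>D. ?\<phi> ` e \<inter> {..<n} \<noteq> {}"
        by (simp_all add: marked_matchings_def)
      then show False
        using False tl_diagram_iff_noncrossing_matching[OF D] meets_iff by blast
    qed
    moreover have "(D, X) \<notin> cell_basis t n"
      using False card_through_strings_eq_iff[where m=m and n=n and D=D]
      by (auto simp: cell_basis_def marked_diagram_def m)
    ultimately show ?thesis
      by blast
  next
    case True
    then have diagram: "tl_diagram m n D" and tops: "\<forall>e\<in>D. \<exists>j. Top j \<in> e"
      by blast+
    have marks_iff: "outer_arc ((`) ?\<phi> ` D) (?\<phi> ` e) \<and> ?\<phi> ` e \<subseteq> {..<n} \<longleftrightarrow>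
        bounds_leftmost m n D e \<and> \<not> through_string e" if e: "e \<in> X" for e
    proof -
      have e_sub: "e \<subseteq> tl_points m n"
        using e X by blast
      show ?thesis
      proof (cases "e \<in> D")
        case True
        then have "card e = 2" and "\<exists>j. Top j \<in> e"
          using diagram tops by (simp_all add: tl_diagram_def)
        then show ?thesis
          using outer_arc_image_tl_pos_iff[OF D e_sub] tl_pos_image_subset_top_iff[OF e_sub] by simp
      next
        case False
        then show ?thesis
          using outer_arc_image_tl_pos_iff[OF D e_sub] by (simp add: bounds_leftmost_def)
      qed
    qed
    have "(`) ?\<phi> ` X \<subseteq> {e'. outer_arc ((`) ?\<phi> ` D) e' \<and> e' \<subseteq> {..<n}} \<longleftrightarrow>
        (\<forall>e\<in>X. outer_arc ((`) ?\<phi> ` D) (?\<phi> ` e) \<and> ?\<phi> ` e \<subseteq> {..<n})"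
      by blast
    then have "relabel ?\<phi> (D, X) \<in> marked_matchings {..<n + m} {..<n} \<longleftrightarrow>
        (\<forall>e\<in>X. outer_arc ((`) ?\<phi> ` D) (?\<phi> ` e) \<and> ?\<phi> ` e \<subseteq> {..<n})"
      using diagram tops meets_iff tl_diagram_iff_noncrossing_matching[OF D]
      by (simp add: marked_matchings_def)
    also have "\<dots> \<longleftrightarrow> (\<forall>e\<in>X. bounds_leftmost m n D e \<and> \<not> through_string e)"
      using marks_iff by blast
    also have "\<dots> \<longleftrightarrow> (D, X) \<in> cell_basis t n"
      using diagram tops card_through_strings_eq_iff[OF diagram]
      by (auto simp: cell_basis_def marked_diagram_def m)
    finally show ?thesis .
  qed
qed

lemma cell_module_dim_eq_marked_count: "cell_module_dim t n = marked_count (nat \<bar>t\<bar>) n"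
proof -
  let ?m = "nat \<bar>t\<bar>"
  have "cell_basis t n \<subseteq> Pow (Pow (tl_points ?m n)) \<times> Pow (Pow (tl_points ?m n))"
    by (auto simp: cell_basis_def marked_diagram_def tl_diagram_def bounds_leftmost_def subset_iff)
  moreover have "marked_matchings {..<n + ?m} {..<n} \<subseteq>
      Pow (Pow (tl_pos ?m n ` tl_points ?m n)) \<times> Pow (Pow (tl_pos ?m n ` tl_points ?m n))"
    using marked_matchings_subset_Pow by (simp add: tl_pos_image)
  ultimately have "card (marked_matchings {..<n + ?m} {..<n}) = card (cell_basis t n)"
  proof (rule card_relabel_eq[OF inj_on_tl_pos])
    fix a :: "pt set set \<times> pt set set"
    assume "a \<in> Pow (Pow (tl_points ?m n)) \<times> Pow (Pow (tl_points ?m n))"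
    then show "relabel (tl_pos ?m n) a \<in> marked_matchings {..<n + ?m} {..<n} \<longleftrightarrow> a \<in> cell_basis t n"
      using relabel_tl_pos_in_marked_matchings_iff[OF refl] by (cases a) simp
  qed
  then show ?thesis
    by (simp add: cell_module_dim_def marked_count_def)
qed

theorem proposition5p5:
  fixes t :: int and k :: nat
  shows "cell_module_dim t (nat \<bar>t\<bar> + 2 * k) = (nat \<bar>t\<bar> + 2 * k) choose k"
  using cell_module_dim_eq_marked_count marked_count_binomial by simp

end
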